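(* Let $n\ge 1$ and let $Q=Q_1\otimes\cdots\otimes Q_n\in\mathcal{P}_n$ satisfy $Q^2=I$, $Q\neq\pm I$, and $Q$ anticommutes with $Z\otimes I\otimes\cdots\otimes I$. Then there exists a unique $X$-circuit $M$ on $n$ qubits such that $M\bullet Q=I\otimes\cdots\otimes I\otimes X$.
   Context: Matrices: $X=\begin{bmatrix}0&1\\1&0\end{bmatrix}$, $Z=\begin{bmatrix}1&0\\0&-1\end{bmatrix}$, $H=\frac{1}{\sqrt2}\begin{bmatrix}1&1\\1&-1\end{bmatrix}$, $CZ=\mathrm{diag}(1,1,1,-1)$. Operators on $n$ qubits act on $(\mathbb{R}^2)^{\otimes n}$, qubit $1$ being the first tensor factor; a one-qubit gate on qubit $i$, or a two-qubit gate on qubits $i,i+1$ (with qubit $i$ the first tensor factor of the gate, called its upper qubit), denotes that matrix tensored with identities on the other qubits. For matrices $C,P$, $C\bullet P=CPC^{-1}$. Real Pauli group: $\mathcal{P}_n=\{\pm(P_1\otimes\cdots\otimes P_n)\mid P_i\in\{I,X,Z,XZ\}\}$. A circuit is a finite sequence of gates $g_1,\dots,g_k$ ($g_1$ applied first); its operator is $g_k\cdots g_1$, and $M\bullet Q$ means (operator of $M$)$\bullet Q$. Derived generators (formal symbols with defining gate sequences; in a two-qubit symbol subscript $1$ is the upper, $2$ the lower qubit; ";" separates steps): $E_1$ = empty, $E_2$ = $Z$; $D_1$ = $CZ;\,H_1,H_2;\,CZ;\,H_1,H_2;\,CZ;\,H_2$; $D_2$ = $H_1;\,CZ;\,H_1,H_2;\,CZ;\,H_2$;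 $D_3$ = $H_1,H_2;\,CZ;\,H_1,H_2;\,CZ;\,H_2$; $D_4$ = $H_1;\,CZ;\,H_1,H_2;\,CZ;\,H_2;\,CZ$. An $X$-circuit on $n$ qubits is a sequence of symbols of the form $D_{d_1}$ on qubits $1,2$, then $D_{d_2}$ on qubits $2,3$, ..., then $D_{d_{n-1}}$ on qubits $n-1,n$, then $E_e$ on qubit $n$ (for $n=1$ it is just $E_e$ on qubit 1), with $d_i\in\{1,2,3,4\}$, $e\in\{1,2\}$; two $X$-circuits are equal when their symbol sequences coincide. *)

theory Defs
  imports "Jordan_Normal_Form.Matrix"
begin

definition Xm :: "real mat" where "Xm = mat_of_rows_list 2 [[0,1],[1,0]]"
definition Zm :: "real mat" where "Zm = mat_of_rows_list 2 [[1,0],[0,-1]]"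
definition Hm :: "real mat" where
  "Hm = (1 / sqrt 2) \<cdot>\<^sub>m mat_of_rows_list 2 [[1,1],[1,-1]]"
definition CZm :: "real mat" where
  "CZm = mat_of_rows_list 4 [[1,0,0,0],[0,1,0,0],[0,0,1,0],[0,0,0,-1]]"

text \<open>Kronecker (tensor) product; the first factor is the most significant index.\<close>
definition kron :: "real mat \<Rightarrow> real mat \<Rightarrow> real mat" where
  "kron A B = mat (dim_row A * dim_row B) (dim_col A * dim_col B)
     (\<lambda>(i,j). A $$ (i div dim_row B, j div dim_col B) * B $$ (i mod dim_row B, j mod dim_col B))"

text \<open>Tensor product of a list of matrices (first list element = qubit 1).\<close>
fun tensor_list :: "real mat list \<Rightarrow> real mat" where
  "tensor_list [] = 1\<^sub>m 1"
| "tensor_list (A # As) = kron A (tensor_list As)"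

text \<open>Conjugation C \<bullet> P = C P C^{-1}.\<close>
definition mat_inv :: "real mat \<Rightarrow> real mat" where
  "mat_inv C = (SOME B. B \<in> carrier_mat (dim_row C) (dim_row C) \<and>
                   C * B = 1\<^sub>m (dim_row C) \<and> B * C = 1\<^sub>m (dim_row C))"

definition conj_mat :: "real mat \<Rightarrow> real mat \<Rightarrow> real mat" where
  "conj_mat C P = C * P * mat_inv C"

definition pauli1 :: "real mat set" where
  "pauli1 = {1\<^sub>m 2, Xm, Zm, Xm * Zm}"

definition pauli_group :: "nat \<Rightarrow> real mat set" where
  "pauli_group n = {s \<cdot>\<^sub>m tensor_list Ps | s Ps.
      s \<in> {1, -1} \<and> length Ps = n \<and> set Ps \<subseteq> pauli1}"

text \<open>Gates on n qubits (qubits numbered 1..n). CZ_g i acts on qubits i, i+1 with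
  qubit i as upper qubit.\<close>
datatype gate = H_g nat | Z_g nat | CZ_g nat

definition op1 :: "nat \<Rightarrow> nat \<Rightarrow> real mat \<Rightarrow> real mat" where
  "op1 n i G = kron (1\<^sub>m (2 ^ (i - 1))) (kron G (1\<^sub>m (2 ^ (n - i))))"

definition op2 :: "nat \<Rightarrow> nat \<Rightarrow> real mat \<Rightarrow> real mat" where
  "op2 n i G = kron (1\<^sub>m (2 ^ (i - 1))) (kron G (1\<^sub>m (2 ^ (n - i - 1))))"

fun gate_op :: "nat \<Rightarrow> gate \<Rightarrow> real mat" where
  "gate_op n (H_g i) = op1 n i Hm"
| "gate_op n (Z_g i) = op1 n i Zm"
| "gate_op n (CZ_g i) = op2 n i CZm"

text \<open>Operator of a circuit g_1,...,g_k (g_1 applied first) is g_k \<cdots> g_1.\<close>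
definition circuit_op :: "nat \<Rightarrow> gate list \<Rightarrow> real mat" where
  "circuit_op n gs = foldl (\<lambda>acc g. gate_op n g * acc) (1\<^sub>m (2 ^ n)) gs"

text \<open>Derived generators. D d i acts on qubits i (upper, subscript 1) and i+1
  (lower, subscript 2); E e i acts on qubit i.\<close>
fun D_gates :: "nat \<Rightarrow> nat \<Rightarrow> gate list" where
  "D_gates d i =
    (if d = 1 then [CZ_g i, H_g i, H_g (i+1), CZ_g i, H_g i, H_g (i+1), CZ_g i, H_g (i+1)]
     else if d = 2 then [H_g i, CZ_g i, H_g i, H_g (i+1), CZ_g i, H_g (i+1)]
     else if d = 3 then [H_g i, H_g (i+1), CZ_g i, H_g i, H_g (i+1), CZ_g i, H_g (i+1)]
     else if d = 4 then [H_g i, CZ_g i, H_g i, H_g (i+1), CZ_g i, H_g (i+1), CZ_g i]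
     else [])"

fun E_gates :: "nat \<Rightarrow> nat \<Rightarrow> gate list" where
  "E_gates e i = (if e = 2 then [Z_g i] else [])"

text \<open>An X-circuit on n qubits is given by its symbol sequence
  D_{d_1}, ..., D_{d_{n-1}}, E_e, i.e. by (ds, e) with ds = [d_1,...,d_{n-1}].\<close>
definition xcircuit_valid :: "nat \<Rightarrow> nat list \<Rightarrow> nat \<Rightarrow> bool" where
  "xcircuit_valid n ds e \<longleftrightarrow> length ds = n - 1 \<and> set ds \<subseteq> {1,2,3,4} \<and> e \<in> {1,2}"

definition xcircuit_gates :: "nat \<Rightarrow> nat list \<Rightarrow> nat \<Rightarrow> gate list" where
  "xcircuit_gates n ds e = concat (map (\<lambda>k. D_gates (ds ! k) (k + 1)) [0..<n - 1]) @ E_gates e n"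

definition Z_first :: "nat \<Rightarrow> real mat" where
  "Z_first n = tensor_list (Zm # replicate (n - 1) (1\<^sub>m 2))"

definition X_last :: "nat \<Rightarrow> real mat" where
  "X_last n = tensor_list (replicate (n - 1) (1\<^sub>m 2) @ [Xm])"

end

theory Submission
  imports Defs
begin

(*
  Write Q = s P\<^sub>1 \<otimes> ... \<otimes> P\<^sub>n with letters P\<^sub>i in {I, X, Z, XZ}.  Conjugation by H, Z and CZ maps
  signed Pauli strings to signed Pauli strings, so a circuit acts on Q symbolically, on the
  pair (sign, letters); and a signed Pauli string is determined by its matrix.
  Anticommutation with Z \<otimes> I \<otimes> ... \<otimes> I forces P\<^sub>1 \<in> {X, XZ}, and Q\<^sup>2 = I forces an even number
  of letters XZ.  Sweeping from left to right: for an upper letter in {X, XZ} and any lower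
  letter b exactly one D\<^sub>d turns the upper letter into I, and it leaves a letter in {X, XZ}
  on the lower qubit, with the parity of XZ letters preserved; later gates never touch the
  cleared qubits.  On the last qubit the letter is then X, and exactly one of E\<^sub>1, E\<^sub>2
  makes the sign +1.
*)

lemma smult_smult_mat: "a \<cdot>\<^sub>m (b \<cdot>\<^sub>m A) = (a * b) \<cdot>\<^sub>m (A :: 'a::semigroup_mult mat)"
  by (rule eq_matI) (simp_all add: mult.assoc)

lemma one_smult_mat [simp]: "1 \<cdot>\<^sub>m A = (A :: 'a::monoid_mult mat)"
  by (rule eq_matI) simp_all

lemma uminus_eq_smult_mat: "- A = (-1) \<cdot>\<^sub>m (A :: 'a::ring_1 mat)"
  by (rule eq_matI) simp_all

lemma mat_mult_mat: "mat n k f * mat k m g = mat n m (\<lambda>(i,j). \<Sum>l<k. f (i,l) * g (l,j))"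
  by (rule eq_matI) (simp_all add: scalar_prod_def lessThan_atLeast0)

lemma smult_mat: "c \<cdot>\<^sub>m mat n m f = mat n m (\<lambda>ij. c * f ij)"
  by (rule eq_matI) simp_all

lemma mat_eq_mat_iff: "mat n m f = mat n m g \<longleftrightarrow> (\<forall>i<n. \<forall>j<m. f (i,j) = g (i,j))"
  by (auto simp: mat_eq_iff)

lemma all_less_2_nat: "(\<forall>i<(2::nat). P i) \<longleftrightarrow> P 0 \<and> P 1"
  by (auto simp: less_Suc_eq numeral_2_eq_2)

lemma all_less_4_nat: "(\<forall>i<(4::nat). P i) \<longleftrightarrow> P 0 \<and> P 1 \<and> P 2 \<and> P 3"
  by (auto simp: less_Suc_eq numeral_eq_Suc)

lemma sum_lessThan_2: "(\<Sum>k<2::nat. f k) = f 0 + (f 1 :: 'a::comm_monoid_add)"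
  by (simp add: numeral_2_eq_2)

lemma sum_lessThan_4: "(\<Sum>k<4::nat. f k) = f 0 + f 1 + f 2 + (f 3 :: 'a::comm_monoid_add)"
  by (simp add: numeral_eq_Suc add.assoc)

lemma sum_lessThan_mult:
  fixes f :: "nat \<Rightarrow> 'a::comm_monoid_add"
  shows "(\<Sum>k<a * b. f k) = (\<Sum>i<a. \<Sum>j<b. f (i * b + j))"
proof -
  have "(\<Sum>k\<in>{i * b..<i * b + b}. f k) = (\<Sum>j<b. f (i * b + j))" for i
    using sum.shift_bounds_nat_ivl[of f 0 "i * b" b] by (simp add: lessThan_atLeast0 add.commute)
  then show ?thesis using sum.nat_group[of f b a] by (simp add: mult.commute)
qed

definition trace :: "'a::comm_monoid_add mat \<Rightarrow> 'a" where
  "trace A = (\<Sum>i<dim_row A. A $$ (i,i))"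

lemma trace_smult: "A \<in> carrier_mat n n \<Longrightarrow> trace (c \<cdot>\<^sub>m A) = c * trace (A :: 'a::semiring_0 mat)"
  unfolding trace_def by (simp add: sum_distrib_left)

lemma trace_one_mat: "trace (1\<^sub>m n :: real mat) = real n"
  unfolding trace_def by simp

lemma mult_conj_assoc:
  assumes "G \<in> carrier_mat N N" "C \<in> carrier_mat N N" "Q \<in> carrier_mat N N" "D \<in> carrier_mat N N"
  shows "G * C * Q * (D * G) = G * (C * Q * D) * G"
  using assms by (simp add: assoc_mult_mat[of _ N N _ N _ N])

lemma mat_inv_eqI:
  assumes C: "C \<in> carrier_mat m m" and B: "B \<in> carrier_mat m m"
    and "C * B = 1\<^sub>m m" and "B * C = 1\<^sub>m m"
  shows "mat_inv C = B"
proof -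
  have "mat_inv C \<in> carrier_mat m m \<and> C * mat_inv C = 1\<^sub>m m \<and> mat_inv C * C = 1\<^sub>m m"
    unfolding mat_inv_def using someI[of "\<lambda>B. B \<in> carrier_mat m m \<and> C * B = 1\<^sub>m m \<and> B * C = 1\<^sub>m m" B]
    using assms by simp
  then have inv: "mat_inv C \<in> carrier_mat m m" "mat_inv C * C = 1\<^sub>m m" by simp_all
  have "mat_inv C = mat_inv C * (C * B)" using inv assms by simp
  also have "\<dots> = (mat_inv C * C) * B" by (rule assoc_mult_mat[symmetric, OF inv(1) C B])
  also have "\<dots> = B" unfolding inv(2) using assms by simp
  finally show ?thesis .
qed


section \<open>Kronecker products\<close>

lemma dim_kron [simp]:
  "dim_row (kron A B) = dim_row A * dim_row B" "dim_col (kron A B) = dim_col A * dim_col B"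
  by (auto simp: kron_def)

lemma index_kron [simp]:
  "i < dim_row A * dim_row B \<Longrightarrow> j < dim_col A * dim_col B \<Longrightarrow>
   kron A B $$ (i,j) = A $$ (i div dim_row B, j div dim_col B) * B $$ (i mod dim_row B, j mod dim_col B)"
  by (auto simp: kron_def)

lemma kron_carrier_mat:
  "A \<in> carrier_mat a1 a2 \<Longrightarrow> B \<in> carrier_mat b1 b2 \<Longrightarrow> kron A B \<in> carrier_mat (a1 * b1) (a2 * b2)"
  unfolding carrier_mat_def by simp

lemma kron_mult:
  assumes A: "A \<in> carrier_mat a1 a2" and B: "B \<in> carrier_mat b1 b2"
    and C: "C \<in> carrier_mat a2 a3" and D: "D \<in> carrier_mat b2 b3"
  shows "kron A B * kron C D = kron (A * C) (B * D)"
proof (rule eq_matI)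
  fix i j assume "i < dim_row (kron (A * C) (B * D))" and "j < dim_col (kron (A * C) (B * D))"
  then have i: "i < a1 * b1" and j: "j < a3 * b3" using A B C D by auto
  then have "b1 > 0" "b3 > 0" by (auto intro: gr0I)
  then have idx: "i div b1 < a1" "j div b3 < a3" "i mod b1 < b1" "j mod b3 < b3"
    using i j by (auto simp: less_mult_imp_div_less)
  have "(kron A B * kron C D) $$ (i,j) = (\<Sum>k<a2 * b2. kron A B $$ (i,k) * kron C D $$ (k,j))"
    using i j A B C D by (simp add: scalar_prod_def lessThan_atLeast0)
  also have "\<dots> = (\<Sum>k<a2 * b2. A $$ (i div b1, k div b2) * B $$ (i mod b1, k mod b2) *
          (C $$ (k div b2, j div b3) * D $$ (k mod b2, j mod b3)))"
    using i j A B C D by (intro sum.cong) auto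
  also have "\<dots> = (\<Sum>p<a2. \<Sum>q<b2. A $$ (i div b1, p) * B $$ (i mod b1, q) *
          (C $$ (p, j div b3) * D $$ (q, j mod b3)))"
    by (subst sum_lessThan_mult) (intro sum.cong refl, simp)
  also have "\<dots> = (\<Sum>p<a2. A $$ (i div b1, p) * C $$ (p, j div b3)) *
        (\<Sum>q<b2. B $$ (i mod b1, q) * D $$ (q, j mod b3))"
    by (simp add: sum_product algebra_simps)
  also have "\<dots> = kron (A * C) (B * D) $$ (i,j)"
    using i j idx A B C D by (simp add: scalar_prod_def lessThan_atLeast0)
  finally show "(kron A B * kron C D) $$ (i,j) = kron (A * C) (B * D) $$ (i,j)" .
qed auto

lemma kron_assoc: "kron (kron A B) C = kron A (kron B C)"
proof (rule eq_matI)
  fix i j assume "i < dim_row (kron A (kron B C))" and "j < dim_col (kron A (kron B C))"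
  let ?b = "dim_row B" and ?c = "dim_row C" and ?b' = "dim_col B" and ?c' = "dim_col C"
  have i: "i < dim_row A * ?b * ?c" and j: "j < dim_col A * ?b' * ?c'"
    using \<open>i < _\<close> \<open>j < _\<close> by (simp_all add: mult.assoc)
  then have "?c > 0" "?c' > 0" by (auto intro: gr0I)
  have digits: "k div m div l = k div (l * m)" "k div m mod l = k mod (l * m) div m"
    "k mod (l * m) mod m = k mod m" if "m > 0" for k l m :: nat
  proof -
    show "k div m div l = k div (l * m)" by (metis div_mult2_eq mult.commute)
    have "k mod (l * m) = m * (k div m mod l) + k mod m" by (metis mod_mult2_eq mult.commute)
    then show "k div m mod l = k mod (l * m) div m" using that by simp
    show "k mod (l * m) mod m = k mod m" by (simp add: mod_mod_cancel)
  qed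
  have "i div ?c < dim_row A * ?b" "j div ?c' < dim_col A * ?b'"
    using i j by (simp_all add: less_mult_imp_div_less)
  moreover have "?b * ?c > 0" "?b' * ?c' > 0" using i j by (auto intro: gr0I)
  then have "i mod (?b * ?c) < ?b * ?c" "j mod (?b' * ?c') < ?b' * ?c'" by simp_all
  ultimately show "kron (kron A B) C $$ (i,j) = kron A (kron B C) $$ (i,j)"
    using i j \<open>?c > 0\<close> \<open>?c' > 0\<close> by (simp add: digits mult.assoc)
qed (simp_all add: mult.assoc)

lemma kron_one_mat_1_left [simp]: "kron (1\<^sub>m (Suc 0)) A = A"
  by (rule eq_matI) auto

lemma kron_one_mat: "kron (1\<^sub>m a) (1\<^sub>m b) = 1\<^sub>m (a * b)"
proof (rule eq_matI)
  fix i j assume "i < dim_row (1\<^sub>m (a * b))" "j < dim_col (1\<^sub>m (a * b))"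
  then have i: "i < a * b" and j: "j < a * b" by auto
  then have "b > 0" by (auto intro: gr0I)
  then show "kron (1\<^sub>m a) (1\<^sub>m b) $$ (i, j) = 1\<^sub>m (a * b) $$ (i, j)"
    using i j by (simp add: less_mult_imp_div_less) (metis div_mult_mod_eq)
qed auto

lemma kron_smult_left: "kron (c \<cdot>\<^sub>m A) B = c \<cdot>\<^sub>m kron A B"
  by (rule eq_matI) (auto simp: less_mult_imp_div_less)

lemma kron_smult_right: "kron A (c \<cdot>\<^sub>m B) = c \<cdot>\<^sub>m kron A B"
proof (rule eq_matI)
  fix i j assume "i < dim_row (c \<cdot>\<^sub>m kron A B)" "j < dim_col (c \<cdot>\<^sub>m kron A B)"
  then have i: "i < dim_row A * dim_row B" and j: "j < dim_col A * dim_col B" by auto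
  then have "dim_row B > 0" "dim_col B > 0" by (auto intro: gr0I)
  then have "i mod dim_row B < dim_row B" "j mod dim_col B < dim_col B" by simp_all
  then show "kron A (c \<cdot>\<^sub>m B) $$ (i, j) = (c \<cdot>\<^sub>m kron A B) $$ (i, j)"
    using i j by simp
qed auto

lemma kron_mat:
  "kron (mat a a' f) (mat b b' g) =
   mat (a * b) (a' * b') (\<lambda>(i,j). f (i div b, j div b') * g (i mod b, j mod b'))"
proof (rule eq_matI)
  fix i j assume "i < dim_row (mat (a * b) (a' * b') (\<lambda>(i,j). f (i div b, j div b') * g (i mod b, j mod b')))"
    "j < dim_col (mat (a * b) (a' * b') (\<lambda>(i,j). f (i div b, j div b') * g (i mod b, j mod b')))"
  then have i: "i < a * b" and j: "j < a' * b'" by auto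
  then have "b > 0" "b' > 0" by (auto intro: gr0I)
  then have "i div b < a" "j div b' < a'" "i mod b < b" "j mod b' < b'"
    using i j by (auto simp: less_mult_imp_div_less)
  then show "kron (mat a a' f) (mat b b' g) $$ (i, j) =
    mat (a * b) (a' * b') (\<lambda>(i,j). f (i div b, j div b') * g (i mod b, j mod b')) $$ (i, j)"
    using i j by simp
qed auto

lemma kron_conj_middle:
  assumes A: "A \<in> carrier_mat p p" and B: "B \<in> carrier_mat m m" and C: "C \<in> carrier_mat q q"
    and G: "G \<in> carrier_mat m m"
  shows "kron (1\<^sub>m p) (kron G (1\<^sub>m q)) * kron A (kron B C) * kron (1\<^sub>m p) (kron G (1\<^sub>m q))
       = kron A (kron (G * B * G) C)"
proof -
  have GI: "kron G (1\<^sub>m q) \<in> carrier_mat (m * q) (m * q)" using G by (simp add: kron_carrier_mat)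
  have "kron (1\<^sub>m p) (kron G (1\<^sub>m q)) * kron A (kron B C) = kron A (kron (G * B) C)"
    using kron_mult[OF one_carrier_mat GI A kron_carrier_mat[OF B C]]
      kron_mult[OF G one_carrier_mat B C] A C by simp
  moreover have "kron A (kron (G * B) C) * kron (1\<^sub>m p) (kron G (1\<^sub>m q)) = kron A (kron (G * B * G) C)"
    using kron_mult[OF A kron_carrier_mat[OF mult_carrier_mat[OF G B] C] one_carrier_mat GI]
      kron_mult[OF mult_carrier_mat[OF G B] C G one_carrier_mat] A C by simp
  ultimately show ?thesis by simp
qed

lemma trace_kron:
  assumes "A \<in> carrier_mat a a" and "B \<in> carrier_mat b b"
  shows "trace (kron A B) = trace A * trace B"
proof -
  have "trace (kron A B) = (\<Sum>k<a * b. A $$ (k div b, k div b) * B $$ (k mod b, k mod b))"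
    unfolding trace_def using assms by (intro sum.cong) auto
  also have "\<dots> = trace A * trace B"
    unfolding trace_def sum_lessThan_mult using assms by (simp add: sum_product)
  finally show ?thesis .
qed


section \<open>Real Pauli letters\<close>

text \<open>\<open>PY\<close> is the real matrix \<open>X Z\<close> (that is, \<open>-i Y\<close>), so all letters are real matrices.\<close>

datatype pauli = PI | PX | PZ | PY

definition pauli_entry :: "pauli \<Rightarrow> nat \<times> nat \<Rightarrow> real" where
  "pauli_entry a = (\<lambda>(i,j). case a of
      PI \<Rightarrow> if i = j then 1 else 0
    | PX \<Rightarrow> if i = j then 0 else 1
    | PZ \<Rightarrow> if i = j then (if i = 0 then 1 else -1) else 0
    | PY \<Rightarrow> if i = j then 0 else (if i = 0 then -1 else 1))"

definition pauli_mat :: "pauli \<Rightarrow> real mat" where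
  "pauli_mat a = mat 2 2 (pauli_entry a)"

lemma pauli_mat_carrier [simp]: "pauli_mat a \<in> carrier_mat 2 2"
  by (simp add: pauli_mat_def)

fun pauli_prod :: "pauli \<Rightarrow> pauli \<Rightarrow> pauli" where
  "pauli_prod PI b = b" | "pauli_prod a PI = a"
| "pauli_prod PX PX = PI" | "pauli_prod PX PZ = PY" | "pauli_prod PX PY = PZ"
| "pauli_prod PZ PX = PY" | "pauli_prod PZ PZ = PI" | "pauli_prod PZ PY = PX"
| "pauli_prod PY PX = PZ" | "pauli_prod PY PZ = PX" | "pauli_prod PY PY = PI"

fun pauli_sign :: "pauli \<Rightarrow> pauli \<Rightarrow> real" where
  "pauli_sign PZ PX = -1" | "pauli_sign PZ PY = -1" | "pauli_sign PY PX = -1"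
| "pauli_sign PY PY = -1" | "pauli_sign _ _ = 1"

lemma pauli_mat_mult: "pauli_mat a * pauli_mat b = pauli_sign a b \<cdot>\<^sub>m pauli_mat (pauli_prod a b)"
  unfolding pauli_mat_def mat_mult_mat smult_mat mat_eq_mat_iff
  by (cases a; cases b) (simp_all add: all_less_2_nat sum_lessThan_2 pauli_entry_def)

lemma pauli_sign_nonzero: "pauli_sign a b \<noteq> 0"
  by (cases a; cases b) simp_all

lemma pauli_prod_eq_PI_iff: "pauli_prod a b = PI \<longleftrightarrow> a = b"
  by (cases a; cases b) simp_all

lemma pauli_prod_PI_right [simp]: "pauli_prod a PI = a"
  by (cases a) simp_all

lemma pauli_sign_PI_right [simp]: "pauli_sign a PI = 1"
  by (cases a) simp_all

lemma trace_pauli_mat: "trace (pauli_mat a) = (if a = PI then 2 else 0)"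
  unfolding trace_def pauli_mat_def by (cases a) (simp_all add: sum_lessThan_2 pauli_entry_def)

lemma one_mat_2_eq_pauli_mat: "1\<^sub>m 2 = pauli_mat PI"
  unfolding pauli_mat_def pauli_entry_def by (rule eq_matI) auto

lemma Xm_eq_pauli_mat: "Xm = pauli_mat PX"
  unfolding Xm_def pauli_mat_def mat_of_rows_list_def pauli_entry_def by (rule eq_matI) (auto simp: numeral_2_eq_2 less_Suc_eq)

lemma Zm_eq_pauli_mat: "Zm = pauli_mat PZ"
  unfolding Zm_def pauli_mat_def mat_of_rows_list_def pauli_entry_def by (rule eq_matI) (auto simp: numeral_2_eq_2 less_Suc_eq)

lemma Xm_Zm_eq_pauli_mat: "Xm * Zm = pauli_mat PY"
  unfolding Xm_eq_pauli_mat Zm_eq_pauli_mat pauli_mat_mult by simp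

lemma pauli1_eq_range_pauli_mat: "pauli1 = range pauli_mat"
proof -
  have "x \<in> {PI, PX, PZ, PY}" for x
    by (cases x) simp_all
  then have "range pauli_mat = pauli_mat ` {PI, PX, PZ, PY}"
    by blast
  then show ?thesis
    unfolding pauli1_def Xm_Zm_eq_pauli_mat
    by (simp add: one_mat_2_eq_pauli_mat Xm_eq_pauli_mat Zm_eq_pauli_mat)
qed

text \<open>Conjugation tables of the gates: \<open>G P G = c Q\<close>, recorded as \<open>(c, Q)\<close>.\<close>

fun H_image :: "pauli \<Rightarrow> real \<times> pauli" where
  "H_image PI = (1, PI)" | "H_image PX = (1, PZ)" | "H_image PZ = (1, PX)" | "H_image PY = (-1, PY)"

fun Z_image :: "pauli \<Rightarrow> real \<times> pauli" where
  "Z_image PI = (1, PI)" | "Z_image PX = (-1, PX)" | "Z_image PZ = (1, PZ)" | "Z_image PY = (-1, PY)"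

fun CZ_image :: "pauli \<Rightarrow> pauli \<Rightarrow> real \<times> pauli \<times> pauli" where
  "CZ_image PI PI = (1, PI, PI)" | "CZ_image PI PX = (1, PZ, PX)"
| "CZ_image PI PZ = (1, PI, PZ)" | "CZ_image PI PY = (1, PZ, PY)"
| "CZ_image PX PI = (1, PX, PZ)" | "CZ_image PX PX = (-1, PY, PY)"
| "CZ_image PX PZ = (1, PX, PI)" | "CZ_image PX PY = (-1, PY, PX)"
| "CZ_image PZ PI = (1, PZ, PI)" | "CZ_image PZ PX = (1, PI, PX)"
| "CZ_image PZ PZ = (1, PZ, PZ)" | "CZ_image PZ PY = (1, PI, PY)"
| "CZ_image PY PI = (1, PY, PZ)" | "CZ_image PY PX = (-1, PX, PY)"
| "CZ_image PY PZ = (1, PY, PI)" | "CZ_image PY PY = (-1, PX, PX)"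

lemma Hm_eq_mat: "Hm = mat 2 2 (\<lambda>(i,j). if i = 1 \<and> j = 1 then - (1 / sqrt 2) else 1 / sqrt 2)"
  unfolding Hm_def mat_of_rows_list_def by (rule eq_matI) (auto simp: numeral_2_eq_2 less_Suc_eq)

lemma CZm_eq_mat: "CZm = mat 4 4 (\<lambda>(i,j). if i = j then (if i = 3 then -1 else 1) else 0)"
  unfolding CZm_def mat_of_rows_list_def by (rule eq_matI) (auto simp: numeral_eq_Suc less_Suc_eq)

lemma Hm_carrier [simp]: "Hm \<in> carrier_mat 2 2"
  unfolding Hm_eq_mat by simp

lemma Zm_carrier [simp]: "Zm \<in> carrier_mat 2 2"
  unfolding Zm_eq_pauli_mat by simp

lemma CZm_carrier [simp]: "CZm \<in> carrier_mat 4 4"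
  unfolding CZm_eq_mat by simp

lemma Hm_conj_pauli_mat: "Hm * pauli_mat a * Hm = fst (H_image a) \<cdot>\<^sub>m pauli_mat (snd (H_image a))"
proof -
  have half: "1 / sqrt 2 * (1 / sqrt 2) = (1 / 2 :: real)"
    by (simp add: divide_simps)
  show ?thesis
    unfolding Hm_eq_mat pauli_mat_def mat_mult_mat smult_mat mat_eq_mat_iff
    by (cases a) (simp_all add: all_less_2_nat sum_lessThan_2 pauli_entry_def half algebra_simps)
qed

lemma Zm_conj_pauli_mat: "Zm * pauli_mat a * Zm = fst (Z_image a) \<cdot>\<^sub>m pauli_mat (snd (Z_image a))"
  unfolding Zm_eq_pauli_mat pauli_mat_def mat_mult_mat smult_mat mat_eq_mat_iff
  by (cases a) (simp_all add: all_less_2_nat sum_lessThan_2 pauli_entry_def)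

lemma CZm_conj_pauli_mat:
  "CZm * kron (pauli_mat a) (pauli_mat b) * CZm =
   (case CZ_image a b of (c, a', b') \<Rightarrow> c \<cdot>\<^sub>m kron (pauli_mat a') (pauli_mat b'))"
  unfolding CZm_eq_mat pauli_mat_def kron_mat
  by (cases a; cases b) (simp_all add: mat_mult_mat smult_mat mat_eq_mat_iff all_less_4_nat sum_lessThan_4 pauli_entry_def)


section \<open>Signed Pauli strings\<close>

definition pauli_string :: "pauli list \<Rightarrow> real mat" where
  "pauli_string as = tensor_list (map pauli_mat as)"

lemma pauli_string_Nil [simp]: "pauli_string [] = 1\<^sub>m 1"
  by (simp add: pauli_string_def)

lemma pauli_string_Cons [simp]: "pauli_string (a # as) = kron (pauli_mat a) (pauli_string as)"
  by (simp add: pauli_string_def)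

lemma pauli_string_carrier [simp]:
  "pauli_string as \<in> carrier_mat (2 ^ length as) (2 ^ length as)"
proof (induction as)
  case (Cons a as)
  then show ?case using kron_carrier_mat[OF pauli_mat_carrier] by simp
qed simp

lemma pauli_string_append: "pauli_string (as @ bs) = kron (pauli_string as) (pauli_string bs)"
  by (induction as) (simp_all add: kron_assoc)

lemma pauli_string_replicate_PI: "pauli_string (replicate k PI) = 1\<^sub>m (2 ^ k)"
proof (induction k)
  case (Suc k)
  then show ?case by (simp add: one_mat_2_eq_pauli_mat[symmetric] kron_one_mat)
qed simp

lemma pauli_string_mult:
  "length as = length bs \<Longrightarrow>
   pauli_string as * pauli_string bs =
     prod_list (map2 pauli_sign as bs) \<cdot>\<^sub>m pauli_string (map2 pauli_prod as bs)"
proof (induction as arbitrary: bs)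
  case (Cons a as)
  then obtain b bs' where bs: "bs = b # bs'" and len: "length as = length bs'"
    by (cases bs) auto
  have "pauli_string bs' \<in> carrier_mat (2 ^ length as) (2 ^ length as)"
    using pauli_string_carrier[of bs'] len by simp
  then have "pauli_string (a # as) * pauli_string bs =
      kron (pauli_mat a * pauli_mat b) (pauli_string as * pauli_string bs')"
    unfolding bs pauli_string_Cons
    by (rule kron_mult[OF pauli_mat_carrier pauli_string_carrier pauli_mat_carrier])
  with Cons.IH[OF len] show ?case
    by (simp add: bs pauli_mat_mult kron_smult_left kron_smult_right smult_smult_mat mult.commute)
qed simp

lemma trace_pauli_string: "trace (pauli_string as) = (if set as \<subseteq> {PI} then 2 ^ length as else 0)"
proof (induction as)
  case (Cons a as)
  then show ?case by (simp add: trace_kron[OF pauli_mat_carrier pauli_string_carrier] trace_pauli_mat)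
qed (simp add: trace_one_mat)

fun pauli_op :: "real \<times> pauli list \<Rightarrow> real mat" where
  "pauli_op (s, as) = s \<cdot>\<^sub>m pauli_string as"

declare pauli_op.simps [simp del]

lemma pauli_op_carrier: "length as = n \<Longrightarrow> pauli_op (s, as) \<in> carrier_mat (2 ^ n) (2 ^ n)"
  by (auto simp: pauli_op.simps)

lemma pauli_op_mult:
  assumes "length as = length bs"
  shows "pauli_op (s, as) * pauli_op (t, bs) =
    pauli_op (s * t * prod_list (map2 pauli_sign as bs), map2 pauli_prod as bs)"
proof -
  have B: "pauli_string bs \<in> carrier_mat (2 ^ length as) (2 ^ length as)"
    using pauli_string_carrier[of bs] assms by simp
  have "pauli_op (s, as) * pauli_op (t, bs) = s \<cdot>\<^sub>m (t \<cdot>\<^sub>m (pauli_string as * pauli_string bs))"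
    using mult_smult_assoc_mat[OF pauli_string_carrier smult_carrier_mat[OF B]]
      mult_smult_distrib[OF pauli_string_carrier B] by (simp add: pauli_op.simps)
  then show ?thesis using assms by (simp add: pauli_op.simps pauli_string_mult smult_smult_mat mult.assoc)
qed

lemma pauli_op_uminus: "- pauli_op (s, as) = pauli_op (- s, as)"
  by (simp add: pauli_op.simps uminus_eq_smult_mat smult_smult_mat)

lemma pauli_op_identity: "pauli_op (1, replicate n PI) = 1\<^sub>m (2 ^ n)"
  by (simp add: pauli_op.simps pauli_string_replicate_PI)

lemma trace_pauli_op: "trace (pauli_op (s, as)) = s * (if set as \<subseteq> {PI} then 2 ^ length as else 0)"
  using trace_smult[OF pauli_string_carrier] by (simp add: pauli_op.simps trace_pauli_string)

definition square_sign :: "pauli list \<Rightarrow> real" where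
  "square_sign as = prod_list (map (\<lambda>a. pauli_sign a a) as)"

lemma map2_pauli_sign_self: "prod_list (map2 pauli_sign as as) = square_sign as"
  unfolding square_sign_def by (induction as) simp_all

lemma map2_pauli_prod_self: "map2 pauli_prod as as = replicate (length as) PI"
  by (induction as) (simp_all add: pauli_prod_eq_PI_iff)

lemma square_sign_nonzero: "square_sign as \<noteq> 0"
  unfolding square_sign_def by (auto simp: prod_list_zero_iff pauli_sign_nonzero)

lemma set_map2_pauli_prod_subset_PI_iff:
  "length bs = length as \<Longrightarrow> set (map2 pauli_prod bs as) \<subseteq> {PI} \<longleftrightarrow> bs = as"
proof (induction bs arbitrary: as)
  case (Cons b bs)
  then show ?case by (cases as) (auto simp: pauli_prod_eq_PI_iff)
qed simp

lemma map2_pauli_replicate_PI: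
  "map2 pauli_prod as (replicate (length as) PI) = as"
  "map2 pauli_prod (replicate (length as) PI) as = as"
  "prod_list (map2 pauli_sign as (replicate (length as) PI)) = 1"
  "prod_list (map2 pauli_sign (replicate (length as) PI) as) = 1"
  by (induction as) simp_all

text \<open>Multiply by the string \<open>as\<close> and take traces: a Pauli string has nonzero trace
  only if all its letters are \<open>I\<close>.\<close>

lemma pauli_op_inj:
  assumes eq: "pauli_op (c, as) = pauli_op (c', bs)" and "c \<noteq> 0" and len: "length bs = length as"
  shows "c' = c \<and> bs = as"
proof -
  have "pauli_op (c, as) * pauli_op (1, as) = pauli_op (c', bs) * pauli_op (1, as)"
    using eq by simp
  then have squared: "pauli_op (c * square_sign as, replicate (length as) PI) =
      pauli_op (c' * prod_list (map2 pauli_sign bs as), map2 pauli_prod bs as)"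
    using len by (simp add: pauli_op_mult map2_pauli_sign_self map2_pauli_prod_self)
  have all_PI: "set (replicate (length as) PI) \<subseteq> {PI}" by auto
  then have traces: "c * square_sign as * 2 ^ length as =
      c' * prod_list (map2 pauli_sign bs as) *
        (if set (map2 pauli_prod bs as) \<subseteq> {PI} then 2 ^ length as else 0)"
    using arg_cong[OF squared, of trace] len by (simp add: trace_pauli_op del: set_map)
  moreover have "c * square_sign as * 2 ^ length as \<noteq> 0"
    using \<open>c \<noteq> 0\<close> square_sign_nonzero by simp
  ultimately have "bs = as"
    using set_map2_pauli_prod_subset_PI_iff[OF len] by (auto split: if_splits)
  with traces all_PI show ?thesis
    using square_sign_nonzero by (simp add: map2_pauli_sign_self map2_pauli_prod_self del: set_map)
qed

lemma pauli_groupE: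
  assumes "Q \<in> pauli_group n"
  obtains s as where "Q = pauli_op (s, as)" and "length as = n" and "s \<in> {1, -1}"
proof -
  obtain s Ps where Q: "Q = s \<cdot>\<^sub>m tensor_list Ps" and "s \<in> {1, -1}" and "length Ps = n"
    and "set Ps \<subseteq> range pauli_mat"
    using assms unfolding pauli_group_def pauli1_eq_range_pauli_mat by blast
  moreover have "\<exists>as. Ps = map pauli_mat as"
    unfolding ex_map_conv using \<open>set Ps \<subseteq> range pauli_mat\<close> by blast
  then obtain as where "Ps = map pauli_mat as" ..
  ultimately show thesis
    using that by (simp add: pauli_op.simps pauli_string_def)
qed

lemma Z_first_eq_pauli_op: "Z_first n = pauli_op (1, PZ # replicate (n - 1) PI)"
  unfolding Z_first_def by (simp add: pauli_op.simps pauli_string_def one_mat_2_eq_pauli_mat Zm_eq_pauli_mat)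

lemma X_last_eq_pauli_op: "X_last n = pauli_op (1, replicate (n - 1) PI @ [PX])"
  unfolding X_last_def by (simp add: pauli_op.simps pauli_string_def one_mat_2_eq_pauli_mat Xm_eq_pauli_mat)

lemma anticommutes_Z_first_imp_first_letter:
  assumes "s \<noteq> 0" and len: "length rest = n - 1"
    and anti: "pauli_op (s, a # rest) * Z_first n = - (Z_first n * pauli_op (s, a # rest))"
  shows "a \<in> {PX, PY}"
proof -
  have Z: "Z_first n = pauli_op (1, PZ # replicate (length rest) PI)"
    unfolding Z_first_eq_pauli_op len ..
  have eq: "pauli_op (s * pauli_sign a PZ, pauli_prod a PZ # rest) =
      pauli_op (- (s * pauli_sign PZ a), pauli_prod PZ a # rest)"
    using anti unfolding Z
    by (simp add: pauli_op_mult pauli_op_uminus map2_pauli_replicate_PI del: map_zip_map2)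
  have "s * pauli_sign a PZ \<noteq> 0"
    using \<open>s \<noteq> 0\<close> pauli_sign_nonzero[of a PZ] by simp
  then have "s * - pauli_sign PZ a = s * pauli_sign a PZ"
    using pauli_op_inj[OF eq] by simp
  then have "- pauli_sign PZ a = pauli_sign a PZ"
    using mult_left_cancel[OF \<open>s \<noteq> 0\<close>] by blast
  then show ?thesis by (cases a) simp_all
qed

lemma square_eq_one_imp_square_sign:
  assumes "s \<in> {1, -1}" and "pauli_op (s, as) * pauli_op (s, as) = 1\<^sub>m (2 ^ length as)"
  shows "square_sign as = 1"
proof -
  have "pauli_op (1, replicate (length as) PI) = pauli_op (s * s * square_sign as, replicate (length as) PI)"
    using assms(2) by (simp add: pauli_op_identity pauli_op_mult map2_pauli_sign_self map2_pauli_prod_self)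
  then have "s * s * square_sign as = 1"
    using pauli_op_inj by force
  moreover have "s * s = 1" using assms(1) by auto
  ultimately show ?thesis by simp
qed


section \<open>Gates acting on signed Pauli strings\<close>

fun gate_valid :: "nat \<Rightarrow> gate \<Rightarrow> bool" where
  "gate_valid n (H_g i) \<longleftrightarrow> 1 \<le> i \<and> i \<le> n"
| "gate_valid n (Z_g i) \<longleftrightarrow> 1 \<le> i \<and> i \<le> n"
| "gate_valid n (CZ_g i) \<longleftrightarrow> 1 \<le> i \<and> i + 1 \<le> n"

text \<open>Qubit \<open>i\<close> is the list position \<open>i - 1\<close>.\<close>

fun gate_action :: "gate \<Rightarrow> real \<times> pauli list \<Rightarrow> real \<times> pauli list" where
  "gate_action (H_g i) (s, as) =
     (s * fst (H_image (as ! (i - 1))), as[i - 1 := snd (H_image (as ! (i - 1)))])"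
| "gate_action (Z_g i) (s, as) =
     (s * fst (Z_image (as ! (i - 1))), as[i - 1 := snd (Z_image (as ! (i - 1)))])"
| "gate_action (CZ_g i) (s, as) =
     (case CZ_image (as ! (i - 1)) (as ! i) of (c, a', b') \<Rightarrow> (s * c, as[i - 1 := a', i := b']))"

abbreviation circuit_action :: "real \<times> pauli list \<Rightarrow> gate list \<Rightarrow> real \<times> pauli list" where
  "circuit_action st gs \<equiv> foldl (\<lambda>st g. gate_action g st) st gs"

lemma length_gate_action: "length (snd (gate_action g st)) = length (snd st)"
  by (cases st; cases g) (auto split: prod.split)

lemma length_circuit_action: "length (snd (circuit_action st gs)) = length (snd st)"
  by (induction gs arbitrary: st) (simp_all add: length_gate_action)

lemma op1_carrier:
  assumes "1 \<le> i" "i \<le> n" "G \<in> carrier_mat 2 2"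
  shows "op1 n i G \<in> carrier_mat (2 ^ n) (2 ^ n)"
proof -
  have "i - 1 + Suc (n - i) = n" using assms by simp
  then have "2 ^ (i - 1) * (2 * 2 ^ (n - i)) = (2::nat) ^ n"
    by (metis power_Suc power_add)
  moreover have "op1 n i G \<in> carrier_mat (2 ^ (i - 1) * (2 * 2 ^ (n - i))) (2 ^ (i - 1) * (2 * 2 ^ (n - i)))"
    unfolding op1_def by (intro kron_carrier_mat one_carrier_mat assms(3))
  ultimately show ?thesis by simp
qed

lemma op2_carrier:
  assumes "1 \<le> i" "i + 1 \<le> n" "G \<in> carrier_mat 4 4"
  shows "op2 n i G \<in> carrier_mat (2 ^ n) (2 ^ n)"
proof -
  have "i - 1 + Suc (Suc (n - i - 1)) = n" using assms by simp
  then have "2 ^ (i - 1) * (2 * (2 * 2 ^ (n - i - 1))) = (2::nat) ^ n"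
    by (metis power_Suc power_add)
  moreover have "op2 n i G \<in> carrier_mat (2 ^ (i - 1) * (4 * 2 ^ (n - i - 1))) (2 ^ (i - 1) * (4 * 2 ^ (n - i - 1)))"
    unfolding op2_def by (intro kron_carrier_mat one_carrier_mat assms(3))
  ultimately show ?thesis by simp
qed

lemma gate_op_carrier: "gate_valid n g \<Longrightarrow> gate_op n g \<in> carrier_mat (2 ^ n) (2 ^ n)"
  by (cases g) (simp_all add: op1_carrier op2_carrier)

lemma op1_conj_pauli_string:
  assumes i: "1 \<le> i" "i \<le> n" and len: "length as = n" and G: "G \<in> carrier_mat 2 2"
    and conj: "G * pauli_mat (as ! (i - 1)) * G = c \<cdot>\<^sub>m pauli_mat a'"
  shows "op1 n i G * pauli_string as * op1 n i G = c \<cdot>\<^sub>m pauli_string (as[i - 1 := a'])"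
proof -
  let ?p = "take (i - 1) as" and ?q = "drop i as" and ?a = "as ! (i - 1)"
  have il: "i - 1 < length as" using i len by simp
  have as: "as = ?p @ ?a # ?q" using id_take_nth_drop[OF il] i by simp
  have upd: "as[i - 1 := a'] = ?p @ a' # ?q" using upd_conv_take_nth_drop[OF il] i by simp
  have op: "op1 n i G = kron (1\<^sub>m (2 ^ length ?p)) (kron G (1\<^sub>m (2 ^ length ?q)))"
    unfolding op1_def using i len by simp
  have string: "pauli_string as = kron (pauli_string ?p) (kron (pauli_mat ?a) (pauli_string ?q))"
    by (subst as) (simp add: pauli_string_append)
  have "op1 n i G * pauli_string as * op1 n i G =
      kron (pauli_string ?p) (kron (G * pauli_mat ?a * G) (pauli_string ?q))"
    unfolding op string
    by (rule kron_conj_middle[OF pauli_string_carrier pauli_mat_carrier pauli_string_carrier G])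
  then show ?thesis
    unfolding conj upd by (simp add: pauli_string_append kron_smult_left kron_smult_right)
qed

lemma op2_CZm_conj_pauli_string:
  assumes i: "1 \<le> i" "i + 1 \<le> n" and len: "length as = n"
  shows "op2 n i CZm * pauli_string as * op2 n i CZm =
     (case CZ_image (as ! (i - 1)) (as ! i) of
        (c, a', b') \<Rightarrow> c \<cdot>\<^sub>m pauli_string (as[i - 1 := a', i := b']))"
proof -
  let ?p = "take (i - 1) as" and ?q = "drop (i + 1) as" and ?a = "as ! (i - 1)" and ?b = "as ! i"
  have "drop (i - 1) as = ?a # ?b # ?q"
    using Cons_nth_drop_Suc[of "i - 1" as] Cons_nth_drop_Suc[of i as] i len by simp
  then have as: "as = ?p @ ?a # ?b # ?q"
    by (metis append_take_drop_id)
  have op: "op2 n i CZm = kron (1\<^sub>m (2 ^ length ?p)) (kron CZm (1\<^sub>m (2 ^ length ?q)))"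
    unfolding op2_def using i len by simp
  have string: "pauli_string as =
      kron (pauli_string ?p) (kron (kron (pauli_mat ?a) (pauli_mat ?b)) (pauli_string ?q))"
    by (subst as) (simp add: pauli_string_append kron_assoc)
  have "kron (pauli_mat ?a) (pauli_mat ?b) \<in> carrier_mat 4 4"
    using kron_carrier_mat[OF pauli_mat_carrier pauli_mat_carrier] by simp
  then have conj: "op2 n i CZm * pauli_string as * op2 n i CZm =
      kron (pauli_string ?p) (kron (CZm * kron (pauli_mat ?a) (pauli_mat ?b) * CZm) (pauli_string ?q))"
    unfolding op string by (rule kron_conj_middle[OF pauli_string_carrier _ pauli_string_carrier CZm_carrier])
  show ?thesis
  proof (cases "CZ_image ?a ?b")
    case (fields c a' b')
    have "as[i - 1 := a', i := b'] = ?p @ a' # b' # ?q"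
      by (subst as) (use i len in \<open>auto simp add: list_update_append\<close>)
    then show ?thesis
      unfolding conj CZm_conj_pauli_mat fields
      by (simp add: pauli_string_append kron_smult_left kron_smult_right kron_assoc)
  qed
qed

lemma gate_op_conj_pauli_op:
  assumes valid: "gate_valid n g" and len: "length as = n"
  shows "gate_op n g * pauli_op (s, as) * gate_op n g = pauli_op (gate_action g (s, as))"
proof -
  have G: "gate_op n g \<in> carrier_mat (2 ^ n) (2 ^ n)" using gate_op_carrier[OF valid] .
  have P: "pauli_string as \<in> carrier_mat (2 ^ n) (2 ^ n)" using pauli_string_carrier[of as] len by simp
  have "gate_op n g * pauli_op (s, as) * gate_op n g = s \<cdot>\<^sub>m (gate_op n g * pauli_string as * gate_op n g)"
    using mult_smult_distrib[OF G P] mult_smult_assoc_mat[OF mult_carrier_mat[OF G P] G]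
    by (simp add: pauli_op.simps)
  also have "\<dots> = pauli_op (gate_action g (s, as))"
    using valid len
    by (cases g) (simp_all add: op1_conj_pauli_string Hm_conj_pauli_mat Zm_conj_pauli_mat
        op2_CZm_conj_pauli_string smult_smult_mat pauli_op.simps split: prod.split)
  finally show ?thesis .
qed

lemma gate_action_identity:
  assumes "gate_valid n g"
  shows "gate_action g (1, replicate n PI) = (1, replicate n PI)"
proof -
  have "(replicate n PI)[k := PI] = replicate n PI" for k
    by (cases "k < n") (auto intro!: nth_equalityI simp: nth_list_update list_update_beyond)
  then show ?thesis using assms by (cases g) auto
qed

lemma gate_op_involution: "gate_valid n g \<Longrightarrow> gate_op n g * gate_op n g = 1\<^sub>m (2 ^ n)"
  using gate_op_conj_pauli_op[of n g "replicate n PI" 1] gate_op_carrier[of n g]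
  by (simp add: gate_action_identity pauli_op_identity)

lemma circuit_op_Nil [simp]: "circuit_op n [] = 1\<^sub>m (2 ^ n)"
  by (simp add: circuit_op_def)

lemma circuit_op_snoc [simp]: "circuit_op n (gs @ [g]) = gate_op n g * circuit_op n gs"
  by (simp add: circuit_op_def)

lemma circuit_op_carrier:
  "\<forall>g\<in>set gs. gate_valid n g \<Longrightarrow> circuit_op n gs \<in> carrier_mat (2 ^ n) (2 ^ n)"
proof (induction gs rule: rev_induct)
  case (snoc g gs)
  then show ?case using mult_carrier_mat[OF gate_op_carrier snoc.IH] by simp
qed simp

lemma circuit_op_append:
  assumes "\<forall>g\<in>set gs. gate_valid n g" and "\<forall>h\<in>set hs. gate_valid n h"
  shows "circuit_op n (gs @ hs) = circuit_op n hs * circuit_op n gs"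
  using assms(2)
proof (induction hs rule: rev_induct)
  case Nil
  then show ?case using circuit_op_carrier[OF assms(1)] by simp
next
  case (snoc h hs)
  then show ?case
    using circuit_op_carrier[OF assms(1)] circuit_op_carrier[of hs n] gate_op_carrier[of n h]
    by (simp flip: append_assoc)
qed

lemma circuit_op_rev_mult:
  "\<forall>g\<in>set gs. gate_valid n g \<Longrightarrow> circuit_op n (rev gs) * circuit_op n gs = 1\<^sub>m (2 ^ n)"
proof (induction gs)
  case (Cons g gs)
  let ?G = "gate_op n g" and ?C = "circuit_op n gs" and ?R = "circuit_op n (rev gs)"
  have carriers: "?G \<in> carrier_mat (2 ^ n) (2 ^ n)" "?C \<in> carrier_mat (2 ^ n) (2 ^ n)"
    "?R \<in> carrier_mat (2 ^ n) (2 ^ n)"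
    using Cons.prems by (simp_all add: gate_op_carrier circuit_op_carrier)
  have "circuit_op n (g # gs) = ?C * ?G"
    using circuit_op_append[of "[g]" n gs] Cons.prems carriers by (simp add: circuit_op_def)
  then have "circuit_op n (rev (g # gs)) * circuit_op n (g # gs) = ?G * ?R * 1\<^sub>m (2 ^ n) * (?C * ?G)"
    using carriers by simp
  also have "\<dots> = ?G * (?R * 1\<^sub>m (2 ^ n) * ?C) * ?G"
    using carriers by (intro mult_conj_assoc) simp_all
  also have "\<dots> = 1\<^sub>m (2 ^ n)"
    using Cons carriers gate_op_involution[of n g] by simp
  finally show ?case .
qed simp

lemma mat_inv_circuit_op:
  assumes "\<forall>g\<in>set gs. gate_valid n g"
  shows "mat_inv (circuit_op n gs) = circuit_op n (rev gs)"
  using assms circuit_op_rev_mult[of gs n] circuit_op_rev_mult[of "rev gs" n]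
  by (intro mat_inv_eqI) (simp_all add: circuit_op_carrier)

lemma conj_mat_circuit_op:
  assumes valid: "\<forall>g\<in>set gs. gate_valid n g" and len: "length as = n"
  shows "conj_mat (circuit_op n gs) (pauli_op (s, as)) = pauli_op (circuit_action (s, as) gs)"
proof -
  have "circuit_op n gs * pauli_op (s, as) * circuit_op n (rev gs) = pauli_op (circuit_action (s, as) gs)"
    using valid
  proof (induction gs rule: rev_induct)
    case Nil
    then show ?case using pauli_op_carrier[OF len, of s] by simp
  next
    case (snoc g gs)
    let ?G = "gate_op n g" and ?C = "circuit_op n gs" and ?R = "circuit_op n (rev gs)"
    obtain s' as' where st: "circuit_action (s, as) gs = (s', as')" by fastforce
    have len': "length as' = n" using length_circuit_action[of "(s, as)" gs] st len by simp
    have carriers: "?G \<in> carrier_mat (2 ^ n) (2 ^ n)" "?C \<in> carrier_mat (2 ^ n) (2 ^ n)"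
      "?R \<in> carrier_mat (2 ^ n) (2 ^ n)" "pauli_op (s, as) \<in> carrier_mat (2 ^ n) (2 ^ n)"
      using snoc.prems len by (simp_all add: gate_op_carrier circuit_op_carrier pauli_op_carrier)
    have "circuit_op n (rev (gs @ [g])) = ?R * ?G"
      using circuit_op_append[of "[g]" n "rev gs"] snoc.prems carriers by (simp add: circuit_op_def)
    then have "circuit_op n (gs @ [g]) * pauli_op (s, as) * circuit_op n (rev (gs @ [g])) =
        ?G * (?C * pauli_op (s, as) * ?R) * ?G"
      using mult_conj_assoc[OF carriers(1,2,4,3)] by simp
    also have "\<dots> = pauli_op (gate_action g (s', as'))"
      using snoc st gate_op_conj_pauli_op[of n g as' s'] len' by simp
    finally show ?case using st by simp
  qed
  then show ?thesis unfolding conj_mat_def mat_inv_circuit_op[OF valid] .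
qed


section \<open>X-circuits\<close>

lemma gate_action_H_upper:
  "i = Suc (length pre) \<Longrightarrow>
   gate_action (H_g i) (s, pre @ a # L) = (s * fst (H_image a), pre @ snd (H_image a) # L)"
  by (simp add: nth_append list_update_append)

lemma gate_action_H_lower:
  "i = Suc (Suc (length pre)) \<Longrightarrow>
   gate_action (H_g i) (s, pre @ a # b # L) = (s * fst (H_image b), pre @ a # snd (H_image b) # L)"
  by (simp add: nth_append list_update_append)

lemma gate_action_Z:
  "i = Suc (length pre) \<Longrightarrow>
   gate_action (Z_g i) (s, pre @ a # L) = (s * fst (Z_image a), pre @ snd (Z_image a) # L)"
  by (simp add: nth_append list_update_append)

lemma gate_action_CZ:
  "i = Suc (length pre) \<Longrightarrow>
   gate_action (CZ_g i) (s, pre @ a # b # L) =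
     (case CZ_image a b of (c, a', b') \<Rightarrow> (s * c, pre @ a' # b' # L))"
  by (simp add: nth_append list_update_append split: prod.split)

text \<open>The action of \<open>D\<^sub>d\<close> on the letters \<open>a b\<close> of its two qubits, as (sign, upper, lower).\<close>

definition D_image :: "nat \<Rightarrow> pauli \<Rightarrow> pauli \<Rightarrow> real \<times> pauli \<times> pauli" where
  "D_image d a b = (case circuit_action (1, [a, b]) (D_gates d 1) of (c, l) \<Rightarrow> (c, l ! 0, l ! 1))"

lemma circuit_action_D_gates:
  assumes "d \<in> {1,2,3,4}"
  shows "circuit_action (s, pre @ a # b # L) (D_gates d (Suc (length pre))) =
    (s * fst (D_image d a b), pre @ fst (snd (D_image d a b)) # snd (snd (D_image d a b)) # L)"
  using assms unfolding D_image_def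
  by (cases a; cases b; auto simp del: gate_action.simps
      simp: gate_action_H_upper[of _ "[]", simplified] gate_action_H_lower[of _ "[]", simplified]
        gate_action_CZ[of _ "[]", simplified] gate_action_H_upper gate_action_H_lower gate_action_CZ)

text \<open>For an upper letter anticommuting with \<open>Z\<close>, exactly one \<open>D\<^sub>d\<close> clears the upper qubit.\<close>

fun clearing_D :: "pauli \<Rightarrow> nat" where
  "clearing_D PI = 1" | "clearing_D PX = 2" | "clearing_D PZ = 3" | "clearing_D PY = 4"

lemma clearing_D_range: "clearing_D b \<in> {1,2,3,4}"
  by (cases b) simp_all

lemma D_image_clearing_D:
  assumes "a \<in> {PX, PY}"
  shows "\<exists>c b'. D_image (clearing_D b) a b = (c, PI, b') \<and> c \<in> {1, -1} \<and> b' \<in> {PX, PY} \<and>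
    pauli_sign b' b' = pauli_sign a a * pauli_sign b b"
  using assms unfolding D_image_def
  by (cases b; auto simp del: gate_action.simps
      simp: gate_action_H_upper[of _ "[]", simplified] gate_action_H_lower[of _ "[]", simplified]
        gate_action_CZ[of _ "[]", simplified])

lemma D_image_not_clearing_D:
  assumes "a \<in> {PX, PY}" and "d \<in> {1,2,3,4}" and "d \<noteq> clearing_D b"
  shows "fst (snd (D_image d a b)) \<noteq> PI"
  using assms unfolding D_image_def
  by (cases b; auto simp del: gate_action.simps
      simp: gate_action_H_upper[of _ "[]", simplified] gate_action_H_lower[of _ "[]", simplified]
        gate_action_CZ[of _ "[]", simplified])

fun gate_index :: "gate \<Rightarrow> nat" where
  "gate_index (H_g i) = i" | "gate_index (Z_g i) = i" | "gate_index (CZ_g i) = i"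

lemma gate_action_nth_unchanged: "j + 2 \<le> gate_index g \<Longrightarrow> snd (gate_action g st) ! j = snd st ! j"
  by (cases st; cases g) (auto split: prod.split)

lemma circuit_action_nth_unchanged:
  "\<forall>g\<in>set gs. j + 2 \<le> gate_index g \<Longrightarrow> snd (circuit_action st gs) ! j = snd st ! j"
  by (induction gs arbitrary: st) (simp_all add: gate_action_nth_unchanged)

text \<open>The symbols \<open>D\<^sub>d\<^sub>0, \<dots>, D\<^sub>d\<^sub>m\<^sub>-\<^sub>1, E\<^sub>e\<close> of an X-circuit
  on the qubits \<open>p + 1, \<dots>, p + m + 1\<close>.\<close>

definition xcircuit_gates_from :: "nat \<Rightarrow> nat list \<Rightarrow> nat \<Rightarrow> nat \<Rightarrow> gate list" where
  "xcircuit_gates_from p ds e m =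
     concat (map (\<lambda>j. D_gates (ds ! j) (Suc p + j)) [0..<m]) @ E_gates e (Suc p + m)"

lemma xcircuit_gates_eq_from: "1 \<le> n \<Longrightarrow> xcircuit_gates n ds e = xcircuit_gates_from 0 ds e (n - 1)"
  unfolding xcircuit_gates_def xcircuit_gates_from_def by simp

lemma xcircuit_gates_from_Cons:
  "xcircuit_gates_from p (d # ds) e (Suc m) = D_gates d (Suc p) @ xcircuit_gates_from (Suc p) ds e m"
proof -
  have "[0..<Suc m] = 0 # map Suc [0..<m]" by (simp add: upt_conv_Cons map_Suc_upt)
  then show ?thesis unfolding xcircuit_gates_from_def by (simp del: D_gates.simps upt_Suc add: o_def)
qed

lemma gate_index_xcircuit_gates_from: "g \<in> set (xcircuit_gates_from p ds e m) \<Longrightarrow> Suc p \<le> gate_index g"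
  unfolding xcircuit_gates_from_def by (auto split: if_splits)

lemma gate_valid_xcircuit_gates_from: "g \<in> set (xcircuit_gates_from p ds e m) \<Longrightarrow> gate_valid (Suc p + m) g"
  unfolding xcircuit_gates_from_def by (auto split: if_splits)

declare D_gates.simps [simp del]

text \<open>The problem left once qubits \<open>1, \<dots>, p\<close> have been cleared to \<open>I\<close>.\<close>

definition xcircuit_solves :: "nat \<Rightarrow> real \<Rightarrow> pauli \<Rightarrow> pauli list \<Rightarrow> nat list \<times> nat \<Rightarrow> bool" where
  "xcircuit_solves p s a rest = (\<lambda>(ds, e). xcircuit_valid (Suc (length rest)) ds e \<and>
     circuit_action (s, replicate p PI @ a # rest) (xcircuit_gates_from p ds e (length rest)) =
       (1, replicate (p + length rest) PI @ [PX]))"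

lemma xcircuit_solves_Nil_iff:
  assumes "s \<in> {1, -1}"
  shows "xcircuit_solves p s PX [] (ds, e) \<longleftrightarrow> ds = [] \<and> e = (if s = 1 then 1 else 2)"
  using assms gate_action_Z[of "Suc p" "replicate p PI" s PX "[]"]
  by (auto simp: xcircuit_solves_def xcircuit_valid_def xcircuit_gates_from_def)

lemma circuit_action_xcircuit_gates_from_Cons:
  assumes "d \<in> {1,2,3,4}"
  shows "circuit_action (s, replicate p PI @ a # b # rest)
      (xcircuit_gates_from p (d # ds) e (Suc (length rest))) =
    circuit_action (s * fst (D_image d a b),
      replicate p PI @ fst (snd (D_image d a b)) # snd (snd (D_image d a b)) # rest)
      (xcircuit_gates_from (Suc p) ds e (length rest))"
  using circuit_action_D_gates[OF assms, of s "replicate p PI" a b rest]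
  by (simp add: xcircuit_gates_from_Cons)

text \<open>Qubit \<open>p + 1\<close> is not touched after its \<open>D\<^sub>d\<close>.\<close>

lemma nth_circuit_action_xcircuit_gates_from_Cons:
  assumes "d \<in> {1,2,3,4}"
  shows "snd (circuit_action (s, replicate p PI @ a # b # rest)
      (xcircuit_gates_from p (d # ds) e (Suc (length rest)))) ! p = fst (snd (D_image d a b))"
  unfolding circuit_action_xcircuit_gates_from_Cons[OF assms]
  using gate_index_xcircuit_gates_from[of _ "Suc p" ds e "length rest"]
  by (subst circuit_action_nth_unchanged) (auto simp: nth_append)

lemma xcircuit_solves_Cons_iff:
  assumes a: "a \<in> {PX, PY}" and clear: "D_image (clearing_D b) a b = (c, PI, b')"
  shows "xcircuit_solves p s a (b # rest) (ds, e) \<longleftrightarrow>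
    (\<exists>ds'. ds = clearing_D b # ds' \<and> xcircuit_solves (Suc p) (s * c) b' rest (ds', e))"
proof (cases ds)
  case (Cons d ds')
  let ?target = "replicate (p + Suc (length rest)) PI @ [PX]"
  have target: "?target ! p = PI"
    by (simp add: nth_append del: replicate.simps)
  have "circuit_action (s, replicate p PI @ a # b # rest)
      (xcircuit_gates_from p (d # ds') e (Suc (length rest))) \<noteq> (1, ?target)"
    if "d \<in> {1,2,3,4}" "d \<noteq> clearing_D b"
  proof
    assume solved: "circuit_action (s, replicate p PI @ a # b # rest)
      (xcircuit_gates_from p (d # ds') e (Suc (length rest))) = (1, ?target)"
    have "fst (snd (D_image d a b)) = snd (1::real, ?target) ! p"
      unfolding solved[symmetric]
      by (rule nth_circuit_action_xcircuit_gates_from_Cons[OF that(1), symmetric])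
    also have "\<dots> = PI"
      unfolding snd_conv by (rule target)
    finally show False
      using D_image_not_clearing_D[OF a that] by contradiction
  qed
  then show ?thesis
    using Cons circuit_action_xcircuit_gates_from_Cons[of "clearing_D b"] clear clearing_D_range[of b]
    by (auto simp: xcircuit_solves_def xcircuit_valid_def replicate_app_Cons_same)
qed (simp add: xcircuit_solves_def xcircuit_valid_def)

lemma xcircuit_solves_ex1:
  assumes "a \<in> {PX, PY}" and "s \<in> {1, -1}" and "square_sign (a # rest) = 1"
  shows "\<exists>!x. xcircuit_solves p s a rest x"
  using assms
proof (induction rest arbitrary: p s a)
  case Nil
  then have "a = PX" by (auto simp: square_sign_def)
  with Nil.prems show ?case
    using xcircuit_solves_Nil_iff by (intro ex1I[of _ "([], if s = 1 then 1 else 2)"]) auto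
next
  case (Cons b rest)
  obtain c b' where clear: "D_image (clearing_D b) a b = (c, PI, b')" and "c \<in> {1, -1}"
    and b': "b' \<in> {PX, PY}" "pauli_sign b' b' = pauli_sign a a * pauli_sign b b"
    using D_image_clearing_D[OF Cons.prems(1)] by blast
  have "s * c \<in> {1, -1}"
    using \<open>c \<in> {1, -1}\<close> Cons.prems(2) by auto
  moreover have "square_sign (b' # rest) = 1"
    using Cons.prems(3) b'(2) by (simp add: square_sign_def mult.assoc)
  ultimately have "\<exists>!x. xcircuit_solves (Suc p) (s * c) b' rest x"
    using Cons.IH[OF b'(1)] by blast
  then obtain x0 where sol0: "xcircuit_solves (Suc p) (s * c) b' rest x0"
    and uniq: "\<And>x. xcircuit_solves (Suc p) (s * c) b' rest x \<Longrightarrow> x = x0"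
    by blast
  obtain ds0 e0 where x0: "x0 = (ds0, e0)" by (cases x0)
  with sol0 have sol: "xcircuit_solves (Suc p) (s * c) b' rest (ds0, e0)" by simp
  show ?case
  proof (rule ex1I[of _ "(clearing_D b # ds0, e0)"])
    show "xcircuit_solves p s a (b # rest) (clearing_D b # ds0, e0)"
      using sol xcircuit_solves_Cons_iff[OF Cons.prems(1) clear] by blast
  next
    fix x
    assume "xcircuit_solves p s a (b # rest) x"
    then show "x = (clearing_D b # ds0, e0)"
      using xcircuit_solves_Cons_iff[OF Cons.prems(1) clear] uniq x0 by (cases x) fastforce
  qed
qed

lemma conj_xcircuit_eq_X_last_iff:
  assumes n: "n \<ge> 1" and len: "length rest = n - 1"
  shows "xcircuit_valid n ds e \<and>
      conj_mat (circuit_op n (xcircuit_gates n ds e)) (pauli_op (s, a # rest)) = X_last n \<longleftrightarrow>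
    xcircuit_solves 0 s a rest (ds, e)"
proof -
  let ?target = "replicate (n - 1) PI @ [PX]"
  obtain c as where action: "circuit_action (s, a # rest) (xcircuit_gates n ds e) = (c, as)"
    by fastforce
  have "length as = length ?target"
    using length_circuit_action[of "(s, a # rest)" "xcircuit_gates n ds e"] action len n by simp
  then have "pauli_op (c, as) = pauli_op (1, ?target) \<longleftrightarrow> (c, as) = (1, ?target)"
    using pauli_op_inj[of 1 ?target c as] by auto
  moreover have "\<forall>g\<in>set (xcircuit_gates n ds e). gate_valid n g"
    using gate_valid_xcircuit_gates_from[of _ 0 ds e "n - 1"] n by (simp add: xcircuit_gates_eq_from)
  then have "conj_mat (circuit_op n (xcircuit_gates n ds e)) (pauli_op (s, a # rest)) = pauli_op (c, as)"
    using conj_mat_circuit_op[of _ n "a # rest" s] action len n by simp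
  ultimately show ?thesis
    using action n len
    by (simp add: X_last_eq_pauli_op xcircuit_solves_def xcircuit_gates_eq_from)
qed

theorem proposition4p12:
  fixes n :: nat and Q :: "real mat"
  assumes "n \<ge> 1"
    and "Q \<in> pauli_group n"
    and "Q * Q = 1\<^sub>m (2 ^ n)"
    and "Q \<noteq> 1\<^sub>m (2 ^ n)" and "Q \<noteq> - 1\<^sub>m (2 ^ n)"
    and "Q * Z_first n = - (Z_first n * Q)"
  shows "\<exists>!(ds, e). xcircuit_valid n ds e \<and>
           conj_mat (circuit_op n (xcircuit_gates n ds e)) Q = X_last n"
proof -
  obtain s as where Q: "Q = pauli_op (s, as)" and len: "length as = n" and s: "s \<in> {1, -1}"
    using pauli_groupE[OF assms(2)] .
  then obtain a rest where as: "as = a # rest" and len_rest: "length rest = n - 1"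
    using assms(1) by (cases as) auto
  have "s \<noteq> 0" using s by auto
  then have "a \<in> {PX, PY}"
    using anticommutes_Z_first_imp_first_letter[OF _ len_rest] assms(6) unfolding Q as by simp
  moreover have "square_sign as = 1"
    using square_eq_one_imp_square_sign[OF s] assms(3) len unfolding Q by blast
  ultimately have "\<exists>!x. xcircuit_solves 0 s a rest x"
    using xcircuit_solves_ex1 s unfolding as by blast
  then show ?thesis
    unfolding Q as conj_xcircuit_eq_X_last_iff[OF assms(1) len_rest] by (simp add: case_prod_eta)
qed

end
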